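(* For all integers $k\geq 1$ and $n\geq 0$, \[ \sum_{i=0}^{n} f_{i}^{(k)} = \sum_{i=0}^{\lfloor n/(k+1) \rfloor} (-1)^{i} \binom{n-ik}{i}2^{n-i(k+1)}. \]
   Context: For an integer $k\geq 1$, the $k$-bonacci numbers $f_n^{(k)}$ ($n\in\mathbb{Z}$) are defined by $f_n^{(k)}=0$ for $n<0$, $f_0^{(k)}=1$, and $f_n^{(k)}=\sum_{i=1}^{k} f_{n-i}^{(k)}$ for $n\geq 1$. Here $\lfloor x\rfloor$ denotes the floor function. *)

theory Defs
  imports Main
begin

function kbonacci :: "nat \<Rightarrow> int \<Rightarrow> int" where
  "kbonacci k n = (if n < 0 then 0 else if n = 0 then 1
                   else (\<Sum>i\<in>{1..k}. kbonacci k (n - int i)))"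
  by auto
termination
  by (relation "measure (\<lambda>(k, n). nat (n + 1))") auto

end

theory Submission
  imports Defs
begin

text \<open>Both sides, as sequences in \<open>n\<close>, equal \<open>2^n\<close> for \<open>n \<le> k\<close> and satisfy
  \<open>s (n + k + 1) = 2 s (n + k) - s n\<close>, so they agree. For the partial sums \<open>s\<close> of the
  \<open>k\<close>-bonacci numbers this is \<open>f (n + 1) = s n - s (n - k)\<close> (with \<open>s = 0\<close> at negative
  indices), the defining recurrence read as a window of \<open>k\<close> consecutive terms. For the
  binomial sum it is Pascal's rule \<open>C(m + 1, i + 1) = C(m, i + 1) + C(m, i)\<close> applied termwise.
  (Equivalently, both have the generating function
  \<open>1 / (1 - 2x + x^(k+1)) = \<Sum>\<^sub>m x^m (2 - x^k)^m\<close>.)\<close>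

lemma sum_greaterThanAtMost_eq_diff:
  fixes g :: "int \<Rightarrow> 'a::ab_group_add"
  assumes "\<And>j. j < 0 \<Longrightarrow> g j = 0" and "a \<le> b"
  shows "sum g {a<..b} = sum g {0..b} - sum g {0..a}"
proof -
  have "sum g {a<..b} = sum g ({a<..b} \<inter> {0..})"
    by (rule sum.mono_neutral_right) (use assms(1) in \<open>auto simp flip: not_less\<close>)
  also have "{a<..b} \<inter> {0..} = {0..b} - {0..a}"
    using assms(2) by auto
  also have "sum g \<dots> = sum g {0..b} - sum g {0..a}"
    using assms(2) by (subst sum_diff) auto
  finally show ?thesis .
qed

lemma sum_lags_eq_atLeastLessThan: "(\<Sum>i=1..k. g (n - int i)) = sum g {n - int k..<n}"
  by (rule sum.reindex_bij_witness[of _ "\<lambda>j. nat (n - j)" "\<lambda>i. n - int i"]) auto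

lemma choose_diff_eq_0: "n < i * (k + 1) \<Longrightarrow> (n - i * k) choose i = 0"
  by (rule binomial_eq_0) (cases i; simp add: algebra_simps)

lemma recurrence_determines_sequence:
  fixes a b :: "nat \<Rightarrow> 'a::ring_1"
  assumes "\<And>m. m \<le> k \<Longrightarrow> a m = b m"
    and "\<And>n. a (n + k + 1) = 2 * a (n + k) - a n"
    and "\<And>n. b (n + k + 1) = 2 * b (n + k) - b n"
  shows "a m = b m"
proof (induction m rule: less_induct)
  case (less m)
  show ?case
  proof (cases "m \<le> k")
    case True
    then show ?thesis by (rule assms(1))
  next
    case False
    then obtain n where m: "m = n + k + 1"
      by (intro that[of "m - k - 1"]) simp
    then have "a (n + k) = b (n + k)" "a n = b n"
      by (simp_all add: less.IH)
    then show ?thesis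
      unfolding m assms(2,3) by simp
  qed
qed

declare kbonacci.simps [simp del]

lemma kbonacci_neg [simp]: "n < 0 \<Longrightarrow> kbonacci k n = 0"
  by (simp add: kbonacci.simps)

lemma kbonacci_0 [simp]: "kbonacci k 0 = 1"
  by (simp add: kbonacci.simps)

lemma kbonacci_pos: "0 < n \<Longrightarrow> kbonacci k n = (\<Sum>i=1..k. kbonacci k (n - int i))"
  by (simp add: kbonacci.simps)

lemma kbonacci_succ_eq_window:
  assumes "0 \<le> n"
  shows "kbonacci k (n + 1) = sum (kbonacci k) {0..n} - sum (kbonacci k) {0..n - int k}"
proof -
  have "kbonacci k (n + 1) = (\<Sum>i=1..k. kbonacci k (n + 1 - int i))"
    using assms by (simp add: kbonacci_pos)
  also have "\<dots> = sum (kbonacci k) {n + 1 - int k..<n + 1}"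
    by (rule sum_lags_eq_atLeastLessThan)
  also have "{n + 1 - int k..<n + 1} = {n - int k<..n}"
    by auto
  finally show ?thesis
    by (simp add: sum_greaterThanAtMost_eq_diff)
qed

definition kbonacci_psum :: "nat \<Rightarrow> nat \<Rightarrow> int" where
  "kbonacci_psum k n = (\<Sum>i=0..n. kbonacci k (int i))"

lemma kbonacci_psum_int: "kbonacci_psum k n = sum (kbonacci k) {0..int n}"
proof -
  have "sum (kbonacci k) {0..int n} = sum (kbonacci k) (int ` {0..n})"
    by (simp add: image_int_atLeastAtMost)
  also have "\<dots> = kbonacci_psum k n"
    by (simp add: sum.reindex kbonacci_psum_def)
  finally show ?thesis ..
qed

lemma kbonacci_psum_Suc:
  "kbonacci_psum k (Suc m) = 2 * kbonacci_psum k m - sum (kbonacci k) {0..int m - int k}"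
proof -
  have "kbonacci_psum k (Suc m) = kbonacci_psum k m + kbonacci k (int m + 1)"
    by (simp add: kbonacci_psum_def add.commute)
  then show ?thesis
    by (simp add: kbonacci_succ_eq_window kbonacci_psum_int)
qed

lemma kbonacci_psum_initial: "m \<le> k \<Longrightarrow> kbonacci_psum k m = 2 ^ m"
proof (induction m)
  case 0
  then show ?case by (simp add: kbonacci_psum_def)
next
  case (Suc m)
  then show ?case by (simp add: kbonacci_psum_Suc)
qed

lemma kbonacci_psum_recurrence:
  "kbonacci_psum k (n + k + 1) = 2 * kbonacci_psum k (n + k) - kbonacci_psum k n"
  using kbonacci_psum_Suc[of k "n + k"] by (simp add: kbonacci_psum_int)

definition signed_binom_term :: "nat \<Rightarrow> nat \<Rightarrow> nat \<Rightarrow> int" where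
  "signed_binom_term k n i = (-1) ^ i * int ((n - i * k) choose i) * 2 ^ (n - i * (k + 1))"

definition signed_binom_sum :: "nat \<Rightarrow> nat \<Rightarrow> int" where
  "signed_binom_sum k n = (\<Sum>i=0..n div (k + 1). signed_binom_term k n i)"

lemma signed_binom_term_eq_0: "n < i * (k + 1) \<Longrightarrow> signed_binom_term k n i = 0"
  by (simp add: signed_binom_term_def choose_diff_eq_0)

lemma signed_binom_sum_atMost:
  assumes "n div (k + 1) \<le> m"
  shows "(\<Sum>i\<le>m. signed_binom_term k n i) = signed_binom_sum k n"
  unfolding signed_binom_sum_def atLeast0AtMost
proof (rule sum.mono_neutral_right)
  show "\<forall>i\<in>{..m} - {..n div (k + 1)}. signed_binom_term k n i = 0"
  proof
    fix i
    assume "i \<in> {..m} - {..n div (k + 1)}"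
    then have "n div (k + 1) < i"
      by auto
    then have "n < i * (k + 1)"
      by (simp only: div_less_iff_less_mult zero_less_Suc add_Suc_right add_0_right)
    then show "signed_binom_term k n i = 0"
      by (rule signed_binom_term_eq_0)
  qed
qed (use assms in auto)

lemma signed_binom_term_0_Suc: "signed_binom_term k (Suc n) 0 = 2 * signed_binom_term k n 0"
  by (simp add: signed_binom_term_def)

lemma signed_binom_term_Suc:
  "signed_binom_term k (n + k + 1) (Suc i) =
     2 * signed_binom_term k (n + k) (Suc i) - signed_binom_term k n i"
proof (cases "i * (k + 1) \<le> n")
  case False
  then show ?thesis
    by (simp add: signed_binom_term_eq_0 algebra_simps)
next
  case True
  then obtain a where n: "n = i * (k + 1) + a"
    using le_Suc_ex by blast
  have args: "n + k + 1 - Suc i * k = Suc (a + i)" "n + k + 1 - Suc i * (k + 1) = a"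
    "n + k - Suc i * k = a + i" "n + k - Suc i * (k + 1) = a - 1"
    "n - i * k = a + i" "n - i * (k + 1) = a"
    by (simp_all add: n algebra_simps)
  \<comment> \<open>For \<open>a = 0\<close> the truncated exponent \<open>a - 1\<close> is harmless: \<open>C(i, i + 1) = 0\<close>.\<close>
  show ?thesis
    unfolding signed_binom_term_def args
    by (cases a) (simp_all add: algebra_simps)
qed

lemma signed_binom_sum_recurrence:
  "signed_binom_sum k (n + k + 1) = 2 * signed_binom_sum k (n + k) - signed_binom_sum k n"
proof -
  let ?t = "signed_binom_term k"
  have "signed_binom_sum k (n + k + 1) = (\<Sum>i\<le>Suc (n + k). ?t (n + k + 1) i)"
    by (rule signed_binom_sum_atMost[symmetric]) (simp add: div_le_dividend le_SucI)
  also have "\<dots> = ?t (n + k + 1) 0 + (\<Sum>i\<le>n + k. ?t (n + k + 1) (Suc i))"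
    by (rule sum.atMost_Suc_shift)
  also have "\<dots> = 2 * (?t (n + k) 0 + (\<Sum>i\<le>n + k. ?t (n + k) (Suc i))) - (\<Sum>i\<le>n + k. ?t n i)"
    by (simp only: signed_binom_term_Suc signed_binom_term_0_Suc[of k "n + k", unfolded Suc_eq_plus1]
        sum_subtractf sum_distrib_left right_diff_distrib distrib_left add_diff_eq)
  also have "?t (n + k) 0 + (\<Sum>i\<le>n + k. ?t (n + k) (Suc i)) = (\<Sum>i\<le>Suc (n + k). ?t (n + k) i)"
    by (rule sum.atMost_Suc_shift[symmetric])
  also have "\<dots> = signed_binom_sum k (n + k)"
    by (rule signed_binom_sum_atMost) (simp add: div_le_dividend le_SucI)
  also have "(\<Sum>i\<le>n + k. ?t n i) = signed_binom_sum k n"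
    by (rule signed_binom_sum_atMost) (simp add: div_le_dividend trans_le_add1)
  finally show ?thesis .
qed

lemma signed_binom_sum_initial: "m \<le> k \<Longrightarrow> signed_binom_sum k m = 2 ^ m"
  by (simp add: signed_binom_sum_def signed_binom_term_def)

theorem theorem2p2:
  fixes k n :: nat
  assumes "k \<ge> 1"
  shows "(\<Sum>i=0..n. kbonacci k (int i)) =
         (\<Sum>i=0..n div (k + 1). (-1) ^ i * int ((n - i * k) choose i) * 2 ^ (n - i * (k + 1)))"
proof -
  have "kbonacci_psum k n = signed_binom_sum k n"
    by (rule recurrence_determines_sequence[where k = k])
      (simp_all only: kbonacci_psum_initial signed_binom_sum_initial
         kbonacci_psum_recurrence signed_binom_sum_recurrence)
  then show ?thesis
    unfolding kbonacci_psum_def signed_binom_sum_def signed_binom_term_def .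
qed

end
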